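(* Every tree (in which every nontrivial pseudo-supremum is a supremum) that is collectionwise Hausdorff in the interval topology is countably metacompact.
   Context: A tree is a partially ordered set in which the set of predecessors of each element is well-ordered. For a nonempty chain bounded above, its pseudo-supremum is the set of its minimal upper bounds; standing assumption: each such set is a singleton. The interval topology has as base all sets $(s,t]=\{x:s<x\le t\}$ together with all singletons $\{t\}$ with $t$ minimal. A space is collectionwise Hausdorff if every closed discrete subset $D$ can be expanded to a pairwise disjoint family of open sets $\{U_d:d\in D\}$ with $d\in U_d$. A space is countably metacompact if every countable open cover has a point-finite open refinement. *)

theory Defs
  imports "HOL-Analysis.Analysis"
begin

definition tle :: "('a \<Rightarrow> 'a \<Rightarrow> bool) \<Rightarrow> 'a \<Rightarrow> 'a \<Rightarrow> bool" where
  "tle lt x y \<longleftrightarrow> lt x y \<or> x = y"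

definition preds :: "'a set \<Rightarrow> ('a \<Rightarrow> 'a \<Rightarrow> bool) \<Rightarrow> 'a \<Rightarrow> 'a set" where
  "preds T lt t = {s \<in> T. lt s t}"

definition is_tree :: "'a set \<Rightarrow> ('a \<Rightarrow> 'a \<Rightarrow> bool) \<Rightarrow> bool" where
  "is_tree T lt \<longleftrightarrow>
     (\<forall>x\<in>T. \<not> lt x x) \<and>
     (\<forall>x\<in>T. \<forall>y\<in>T. \<forall>z\<in>T. lt x y \<and> lt y z \<longrightarrow> lt x z) \<and>
     (\<forall>t\<in>T.
        (\<forall>x\<in>preds T lt t. \<forall>y\<in>preds T lt t. lt x y \<or> x = y \<or> lt y x) \<and>
        (\<forall>S. S \<subseteq> preds T lt t \<and> S \<noteq> {} \<longrightarrow> (\<exists>m\<in>S. \<forall>s\<in>S. \<not> lt s m)))"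

definition is_chain :: "'a set \<Rightarrow> ('a \<Rightarrow> 'a \<Rightarrow> bool) \<Rightarrow> 'a set \<Rightarrow> bool" where
  "is_chain T lt C \<longleftrightarrow> C \<subseteq> T \<and> (\<forall>x\<in>C. \<forall>y\<in>C. lt x y \<or> x = y \<or> lt y x)"

definition upper_bounds :: "'a set \<Rightarrow> ('a \<Rightarrow> 'a \<Rightarrow> bool) \<Rightarrow> 'a set \<Rightarrow> 'a set" where
  "upper_bounds T lt C = {u \<in> T. \<forall>c\<in>C. tle lt c u}"

definition pseudo_sup :: "'a set \<Rightarrow> ('a \<Rightarrow> 'a \<Rightarrow> bool) \<Rightarrow> 'a set \<Rightarrow> 'a set" where
  "pseudo_sup T lt C =
     {u \<in> upper_bounds T lt C. \<not> (\<exists>v\<in>upper_bounds T lt C. lt v u)}"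

definition pseudo_sups_singletons :: "'a set \<Rightarrow> ('a \<Rightarrow> 'a \<Rightarrow> bool) \<Rightarrow> bool" where
  "pseudo_sups_singletons T lt \<longleftrightarrow>
     (\<forall>C. is_chain T lt C \<and> C \<noteq> {} \<and> upper_bounds T lt C \<noteq> {}
          \<longrightarrow> (\<exists>u. pseudo_sup T lt C = {u}))"

definition interval_topology :: "'a set \<Rightarrow> ('a \<Rightarrow> 'a \<Rightarrow> bool) \<Rightarrow> 'a topology" where
  "interval_topology T lt = topology_generated_by
     ({{x \<in> T. lt s x \<and> tle lt x t} | s t. s \<in> T \<and> t \<in> T} \<union>
      {{t} | t. t \<in> T \<and> \<not> (\<exists>s\<in>T. lt s t)})"

definition collectionwise_hausdorff :: "'a topology \<Rightarrow> bool" where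
  "collectionwise_hausdorff X \<longleftrightarrow>
     (\<forall>D. closedin X D \<and> subtopology X D = discrete_topology D \<longrightarrow>
        (\<exists>U. (\<forall>d\<in>D. openin X (U d) \<and> d \<in> U d) \<and>
             (\<forall>d\<in>D. \<forall>e\<in>D. d \<noteq> e \<longrightarrow> U d \<inter> U e = {})))"

definition countably_metacompact :: "'a topology \<Rightarrow> bool" where
  "countably_metacompact X \<longleftrightarrow>
     (\<forall>\<U>. countable \<U> \<and> (\<forall>U\<in>\<U>. openin X U) \<and> \<Union>\<U> = topspace X \<longrightarrow>
        (\<exists>\<V>. (\<forall>V\<in>\<V>. openin X V) \<and> \<Union>\<V> = topspace X \<and>
              (\<forall>V\<in>\<V>. \<exists>U\<in>\<U>. V \<subseteq> U) \<and>
              (\<forall>x\<in>topspace X. finite {V\<in>\<V>. x \<in> V})))"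

end

theory Submission
  imports Defs
begin

text \<open>
  Let \<open>u\<^sub>0, u\<^sub>1, \<dots>\<close> be a countable open cover. The closed sets
  \<open>F\<^sub>n = T - (u\<^sub>0 \<union> \<dots> \<union> u\<^sub>n\<^sub>-\<^sub>1)\<close> decrease to the empty set, and as soon as they have open
  expansions \<open>W\<^sub>n \<supseteq> F\<^sub>n\<close> that still have empty intersection, the sets
  \<open>u\<^sub>n \<inter> W\<^sub>0 \<inter> \<dots> \<inter> W\<^sub>n\<close> form a point-finite open refinement.

  In a tree, the upward closures \<open>G\<^sub>n\<close> of the \<open>F\<^sub>n\<close> still have empty intersection.
  Indeed, let \<open>p\<close> be a minimal point of it. If \<open>p \<notin> F\<^sub>k\<close>, some basic neighbourhood
  \<open>(s,p]\<close> misses the closed set \<open>F\<^sub>k\<close>, so every point of \<open>F\<^sub>m\<close> (\<open>m \<ge> k\<close>) below \<open>p\<close> lies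
  below \<open>s\<close>, which puts \<open>s\<close> into the intersection as well. Hence \<open>p\<close> lies in every \<open>F\<^sub>n\<close>.
  The minimal elements \<open>D\<^sub>n\<close> of \<open>G\<^sub>n\<close> form a closed discrete set, so collectionwise
  Hausdorffness separates them by disjoint open sets \<open>U\<^sub>n(d)\<close>. Let \<open>W\<^sub>n\<close> consist of the
  points strictly above \<open>G\<^sub>n\<close> together with the sets \<open>U\<^sub>n(d) \<inter> U\<^sub>n\<^sub>-\<^sub>1(d)\<close>, where
  \<open>U\<^sub>n\<^sub>-\<^sub>1(d)\<close> is replaced by the points strictly above \<open>G\<^sub>n\<^sub>-\<^sub>1\<close> if \<open>d \<notin> D\<^sub>n\<^sub>-\<^sub>1\<close>. A point
  lying in every \<open>W\<^sub>n\<close> but outside \<open>G\<^sub>N\<close> is, from stage \<open>N\<close> on, trapped in \<open>U\<^sub>n(d)\<close> for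
  one and the same \<open>d\<close>, which then belongs to every \<open>G\<^sub>n\<close>.
\<close>

lemma countably_metacompactI_closed_decseq:
  assumes expand: "\<And>F. (\<And>n. closedin X (F n)) \<Longrightarrow> decseq F \<Longrightarrow> (\<Inter>n. F n) = {} \<Longrightarrow>
      \<exists>W. (\<forall>n. openin X (W n) \<and> F n \<subseteq> W n) \<and> (\<Inter>n. W n) = {}"
  shows "countably_metacompact X"
  unfolding countably_metacompact_def
proof (intro allI impI, elim conjE)
  fix \<U> :: "'a set set"
  assume "countable \<U>" and opn: "\<forall>U\<in>\<U>. openin X U" and cov: "\<Union>\<U> = topspace X"
  show "\<exists>\<V>. (\<forall>V\<in>\<V>. openin X V) \<and> \<Union>\<V> = topspace X \<and> (\<forall>V\<in>\<V>. \<exists>U\<in>\<U>. V \<subseteq> U) \<and>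
            (\<forall>x\<in>topspace X. finite {V\<in>\<V>. x \<in> V})"
  proof (cases "\<U> = {}")
    case True
    then show ?thesis using cov by (intro exI[of _ "{}"]) auto
  next
    case False
    define u where "u = from_nat_into \<U>"
    have ru: "range u = \<U>"
      unfolding u_def using range_from_nat_into[OF False \<open>countable \<U>\<close>] .
    define F where "F n = topspace X - (\<Union>i<n. u i)" for n
    have "closedin X (F n)" for n
      unfolding F_def using opn ru by (intro closedin_diff closedin_topspace openin_Union) auto
    moreover have "decseq F"
      unfolding decseq_def F_def by auto
    moreover have "(\<Inter>n. F n) = {}"
    proof -
      have "x \<notin> F (Suc i)" if "x \<in> u i" for x i
        using that unfolding F_def by blast
      then show ?thesis
        using cov ru unfolding F_def by blast
    qed
    ultimately obtain W where W_open: "\<And>n. openin X (W n)" and FW: "\<And>n. F n \<subseteq> W n"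
      and W_empty: "(\<Inter>n. W n) = {}"
      using expand by metis
    define V where "V n = u n \<inter> (\<Inter>k\<le>n. W k)" for n
    have u_sub: "u n \<subseteq> topspace X" for n
      using openin_subset opn ru by blast
    show ?thesis
    proof (intro exI[of _ "range V"] conjI ballI)
      show "openin X V'" if "V' \<in> range V" for V'
        using that unfolding V_def by (auto intro!: openin_Int openin_INT2 W_open simp: opn ru[symmetric])
      show "\<exists>U\<in>\<U>. V' \<subseteq> U" if "V' \<in> range V" for V'
        using that ru unfolding V_def by blast
      show "\<Union>(range V) = topspace X"
      proof
        show "\<Union>(range V) \<subseteq> topspace X"
          unfolding V_def using u_sub by blast
        show "topspace X \<subseteq> \<Union>(range V)"
        proof
          fix x assume x: "x \<in> topspace X"
          then have "\<exists>i. x \<in> u i" using cov ru by blast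
          define n where "n = (LEAST i. x \<in> u i)"
          have "x \<in> u n"
            unfolding n_def using \<open>\<exists>i. x \<in> u i\<close> by (rule LeastI_ex)
          have "x \<notin> u i" if "i < n" for i
            using not_less_Least[of i "\<lambda>i. x \<in> u i"] that unfolding n_def by blast
          then have "x \<in> F k" if "k \<le> n" for k
            using x that unfolding F_def by auto
          then show "x \<in> \<Union>(range V)"
            using FW \<open>x \<in> u n\<close> unfolding V_def by blast
        qed
      qed
      fix x assume "x \<in> topspace X"
      obtain m where m: "x \<notin> W m" using W_empty by blast
      have "n < m" if "x \<in> V n" for n
      proof (rule ccontr)
        assume "\<not> n < m"
        then have "x \<in> W m" using that unfolding V_def by auto
        then show False using m by blast
      qed
      then have "{V'\<in>range V. x \<in> V'} \<subseteq> V ` {..<m}"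
        by blast
      then show "finite {V'\<in>range V. x \<in> V'}"
        by (rule finite_subset) simp
    qed
  qed
qed

locale tree =
  fixes T :: "'a set" and lt :: "'a \<Rightarrow> 'a \<Rightarrow> bool"
  assumes is_tree: "is_tree T lt"
begin

abbreviation X :: "'a topology" where
  "X \<equiv> interval_topology T lt"

abbreviation ioc :: "'a \<Rightarrow> 'a \<Rightarrow> 'a set" where
  "ioc s t \<equiv> {x \<in> T. lt s x \<and> tle lt x t}"

definition upset :: "'a set \<Rightarrow> 'a set" where
  "upset A = {z \<in> T. \<exists>x\<in>A. tle lt x z}"

definition strict_upset :: "'a set \<Rightarrow> 'a set" where
  "strict_upset A = {z \<in> T. \<exists>x\<in>A. lt x z}"

definition minimals :: "'a set \<Rightarrow> 'a set" where
  "minimals A = {x \<in> A. \<forall>d\<in>A. \<not> lt d x}"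

lemma lt_trans: "x \<in> T \<Longrightarrow> y \<in> T \<Longrightarrow> z \<in> T \<Longrightarrow> lt x y \<Longrightarrow> lt y z \<Longrightarrow> lt x z"
  using is_tree unfolding is_tree_def by blast

lemma tle_trans: "x \<in> T \<Longrightarrow> y \<in> T \<Longrightarrow> z \<in> T \<Longrightarrow> tle lt x y \<Longrightarrow> tle lt y z \<Longrightarrow> tle lt x z"
  unfolding tle_def using lt_trans by blast

lemma tle_lt_trans: "x \<in> T \<Longrightarrow> y \<in> T \<Longrightarrow> z \<in> T \<Longrightarrow> tle lt x y \<Longrightarrow> lt y z \<Longrightarrow> lt x z"
  unfolding tle_def using lt_trans by blast

lemma lt_linear_below:
  "p \<in> T \<Longrightarrow> x \<in> T \<Longrightarrow> y \<in> T \<Longrightarrow> lt x p \<Longrightarrow> lt y p \<Longrightarrow> lt x y \<or> x = y \<or> lt y x"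
  using is_tree unfolding is_tree_def preds_def by blast

lemma tle_linear_below:
  "p \<in> T \<Longrightarrow> x \<in> T \<Longrightarrow> y \<in> T \<Longrightarrow> tle lt x p \<Longrightarrow> tle lt y p \<Longrightarrow> tle lt x y \<or> lt y x"
  unfolding tle_def using lt_linear_below by blast

lemma wf_preds: "p \<in> T \<Longrightarrow> S \<subseteq> preds T lt p \<Longrightarrow> S \<noteq> {} \<Longrightarrow> \<exists>m\<in>S. \<forall>s\<in>S. \<not> lt s m"
  using is_tree unfolding is_tree_def by (metis (no_types, lifting))

lemma minimals_nonempty:
  assumes "A \<subseteq> T" "A \<noteq> {}"
  shows "minimals A \<noteq> {}"
proof -
  obtain y where y: "y \<in> A" using assms(2) by blast
  show ?thesis
  proof (cases "A \<inter> preds T lt y = {}")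
    case True
    then have "y \<in> minimals A"
      using y assms(1) unfolding preds_def minimals_def by blast
    then show ?thesis by blast
  next
    case False
    then obtain m where m: "m \<in> A \<inter> preds T lt y" "\<forall>a\<in>A \<inter> preds T lt y. \<not> lt a m"
      using wf_preds[of y "A \<inter> preds T lt y"] y assms(1) by blast
    have "\<not> lt a m" if "a \<in> A" for a
      using m that assms(1) lt_trans[of a m y] y unfolding preds_def by blast
    then have "m \<in> minimals A"
      using m unfolding minimals_def by blast
    then show ?thesis by blast
  qed
qed

lemma upset_subset: "upset A \<subseteq> T"
  unfolding upset_def by blast

lemma subset_upset: "A \<subseteq> T \<Longrightarrow> A \<subseteq> upset A"
  unfolding upset_def tle_def by blast

lemma strict_upset_upset: "A \<subseteq> T \<Longrightarrow> strict_upset (upset A) \<subseteq> upset A"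
  unfolding strict_upset_def upset_def tle_def using lt_trans by blast

lemma upset_mono: "A \<subseteq> B \<Longrightarrow> upset A \<subseteq> upset B"
  unfolding upset_def by blast

lemma decseq_upset: "decseq F \<Longrightarrow> decseq (\<lambda>n. upset (F n))"
  unfolding decseq_def using upset_mono by blast

lemma topspace_interval_topology [simp]: "topspace X = T"
  unfolding interval_topology_def topology_generated_by_topspace
proof (intro equalityI subsetI)
  fix t assume t: "t \<in> T"
  show "t \<in> \<Union>({ioc s t | s t. s \<in> T \<and> t \<in> T} \<union> {{t} | t. t \<in> T \<and> \<not> (\<exists>s\<in>T. lt s t)})"
  proof (cases "\<exists>s\<in>T. lt s t")
    case True
    then obtain s where "s \<in> T" "lt s t" by blast
    then have "t \<in> ioc s t" using t by (simp add: tle_def)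
    then show ?thesis using \<open>s \<in> T\<close> t by blast
  next
    case False
    then show ?thesis using t by blast
  qed
qed blast

lemma openin_ioc: "s \<in> T \<Longrightarrow> t \<in> T \<Longrightarrow> openin X (ioc s t)"
  unfolding interval_topology_def by (rule topology_generated_by_Basis) blast

lemma openin_minimal_singleton: "t \<in> T \<Longrightarrow> \<forall>s\<in>T. \<not> lt s t \<Longrightarrow> openin X {t}"
  unfolding interval_topology_def by (rule topology_generated_by_Basis) blast

lemma openin_contains_ioc:
  assumes "openin X U" "p \<in> U" "s\<^sub>0 \<in> T" "lt s\<^sub>0 p"
  shows "\<exists>s\<in>T. lt s p \<and> ioc s p \<subseteq> U"
proof -
  have p: "p \<in> T" using openin_subset[OF assms(1)] assms(2) by auto
  have "generate_topology_on
      ({ioc s t | s t. s \<in> T \<and> t \<in> T} \<union> {{t} | t. t \<in> T \<and> \<not> (\<exists>s\<in>T. lt s t)}) U"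
    using assms(1) unfolding interval_topology_def by (rule openin_topology_generated_by)
  then show ?thesis using assms(2-4)
  proof (induction U)
    case Empty
    then show ?case by simp
  next
    case (Int a b)
    then obtain s\<^sub>1 s\<^sub>2 where s\<^sub>1: "s\<^sub>1 \<in> T" "lt s\<^sub>1 p" "ioc s\<^sub>1 p \<subseteq> a"
      and s\<^sub>2: "s\<^sub>2 \<in> T" "lt s\<^sub>2 p" "ioc s\<^sub>2 p \<subseteq> b" by auto
    from tle_linear_below[OF p s\<^sub>1(1) s\<^sub>2(1)] s\<^sub>1(2) s\<^sub>2(2)
    have "tle lt s\<^sub>1 s\<^sub>2 \<or> lt s\<^sub>2 s\<^sub>1" by (simp add: tle_def)
    then show ?case
    proof
      assume "tle lt s\<^sub>1 s\<^sub>2"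
      then have "ioc s\<^sub>2 p \<subseteq> a" using s\<^sub>1 s\<^sub>2 tle_lt_trans by blast
      then show ?case using s\<^sub>2 by blast
    next
      assume "lt s\<^sub>2 s\<^sub>1"
      then have "ioc s\<^sub>1 p \<subseteq> b" using s\<^sub>1 s\<^sub>2 lt_trans by blast
      then show ?case using s\<^sub>1 by blast
    qed
  next
    case (UN K)
    then show ?case by blast
  next
    case (Basis B)
    then consider (ioc) s t where "s \<in> T" "t \<in> T" "B = ioc s t"
      | (singleton) t where "B = {t}" "\<not> (\<exists>s\<in>T. lt s t)"
      by blast
    then show ?case
    proof cases
      case ioc
      then have "lt s p" "tle lt p t" using Basis by auto
      then have "ioc s p \<subseteq> B" using ioc p tle_trans by blast
      then show ?thesis using ioc \<open>lt s p\<close> by blast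
    next
      case singleton
      then show ?thesis using Basis by blast
    qed
  qed
qed

lemma openin_strict_upset: "A \<subseteq> T \<Longrightarrow> openin X (strict_upset A)"
proof (subst openin_subopen, intro ballI)
  fix z assume "A \<subseteq> T" "z \<in> strict_upset A"
  then obtain d where d: "z \<in> T" "d \<in> A" "d \<in> T" "lt d z"
    unfolding strict_upset_def by blast
  then have "openin X (ioc d z)" "z \<in> ioc d z" "ioc d z \<subseteq> strict_upset A"
    using openin_ioc unfolding strict_upset_def tle_def by auto
  then show "\<exists>V. openin X V \<and> z \<in> V \<and> V \<subseteq> strict_upset A" by blast
qed

lemma closedin_minimals:
  assumes "A \<subseteq> T"
  shows "closedin X (minimals A)"
  unfolding closedin_def topspace_interval_topology
proof (intro conjI)
  show "minimals A \<subseteq> T" using assms unfolding minimals_def by blast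
  show "openin X (T - minimals A)"
    unfolding openin_subopen[of X "T - minimals A"]
  proof
    fix p assume p: "p \<in> T - minimals A"
    show "\<exists>V. openin X V \<and> p \<in> V \<and> V \<subseteq> T - minimals A"
    proof (cases "\<exists>s\<in>T. lt s p")
      case False
      then show ?thesis using openin_minimal_singleton[of p] p by blast
    next
      case True
      then obtain s where s: "s \<in> T" "lt s p" by blast
      show ?thesis
      proof (cases "\<exists>d\<in>minimals A. lt d p")
        case True
        then obtain d where d: "d \<in> minimals A" "lt d p" by blast
        then have "openin X (ioc d p)" using openin_ioc assms p unfolding minimals_def by blast
        moreover have "ioc d p \<subseteq> T - minimals A" using d unfolding minimals_def by blast
        ultimately show ?thesis using d p by (auto simp: tle_def)
      next
        case False
        then have "ioc s p \<subseteq> T - minimals A" using p unfolding tle_def by blast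
        then show ?thesis using openin_ioc s p by (auto simp: tle_def)
      qed
    qed
  qed
qed

lemma discrete_minimals:
  assumes "A \<subseteq> T"
  shows "subtopology X (minimals A) = discrete_topology (minimals A)"
  unfolding eq_commute[of "subtopology X (minimals A)"] discrete_topology_unique
proof (intro conjI ballI)
  have "minimals A \<subseteq> T" using assms unfolding minimals_def by blast
  then show "topspace (subtopology X (minimals A)) = minimals A" by auto
  fix x assume x: "x \<in> minimals A"
  show "openin (subtopology X (minimals A)) {x}"
    unfolding openin_subtopology
  proof (cases "\<exists>s\<in>T. lt s x")
    case False
    then show "\<exists>V. openin X V \<and> {x} = V \<inter> minimals A"
      using openin_minimal_singleton[of x] x assms unfolding minimals_def by blast
  next
    case True
    then obtain s where s: "s \<in> T" "lt s x" by blast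
    then have "openin X (ioc s x)" using openin_ioc x assms unfolding minimals_def by blast
    moreover have "{x} = ioc s x \<inter> minimals A"
      using x s assms unfolding minimals_def tle_def by blast
    ultimately show "\<exists>V. openin X V \<and> {x} = V \<inter> minimals A" by blast
  qed
qed

lemma minimal_Inter_upset_mem:
  assumes closed: "\<And>n. closedin X (F n)" and "decseq F"
    and p: "p \<in> minimals (\<Inter>n. upset (F n))"
  shows "p \<in> F k"
proof (rule ccontr)
  let ?B = "\<Inter>n. upset (F n)"
  assume "p \<notin> F k"
  have pB: "p \<in> ?B" and p_min: "\<forall>q\<in>?B. \<not> lt q p"
    using p unfolding minimals_def by auto
  have pT: "p \<in> T" using pB upset_subset by blast
  have F_sub: "F n \<subseteq> T" for n
    using closedin_subset[OF closed] by simp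
  obtain x where x: "x \<in> F k" "tle lt x p" using pB unfolding upset_def by blast
  then have "lt x p" "x \<in> T" using \<open>p \<notin> F k\<close> F_sub unfolding tle_def by auto
  moreover have "openin X (T - F k)" using closed[of k] unfolding closedin_def by simp
  ultimately obtain s where s: "s \<in> T" "lt s p" "ioc s p \<subseteq> T - F k"
    using openin_contains_ioc pT \<open>p \<notin> F k\<close> by blast
  then have "s \<notin> ?B" using p_min by blast
  then obtain n where n: "s \<notin> upset (F n)" by blast
  define m where "m = max n k"
  have "F m \<subseteq> F n" "F m \<subseteq> F k"
    using \<open>decseq F\<close> unfolding m_def decseq_def by auto
  obtain x' where x': "x' \<in> F m" "tle lt x' p" using pB unfolding upset_def by blast
  have "x' \<in> T" using x' F_sub by blast
  from tle_linear_below[OF pT this s(1) x'(2)] s(2)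
  consider "tle lt x' s" | "lt s x'" by (auto simp: tle_def)
  then show False
  proof cases
    case 1
    then have "s \<in> upset (F n)" using x' s \<open>F m \<subseteq> F n\<close> unfolding upset_def by blast
    then show False using n by blast
  next
    case 2
    then have "x' \<in> ioc s p" using x' \<open>x' \<in> T\<close> by blast
    then show False using s(3) x'(1) \<open>F m \<subseteq> F k\<close> by blast
  qed
qed

lemma Inter_upset_eq_empty:
  assumes "\<And>n. closedin X (F n)" and "decseq F" and "(\<Inter>n. F n) = {}"
  shows "(\<Inter>n. upset (F n)) = {}"
proof (rule ccontr)
  assume "(\<Inter>n. upset (F n)) \<noteq> {}"
  moreover have "(\<Inter>n. upset (F n)) \<subseteq> T" using upset_subset by blast
  ultimately obtain p where "p \<in> minimals (\<Inter>n. upset (F n))"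
    using minimals_nonempty[of "\<Inter>n. upset (F n)"] by blast
  then have "p \<in> F k" for k
    using minimal_Inter_upset_mem assms(1,2) by blast
  then show False using assms(3) by blast
qed

lemma separating_family_minimals:
  assumes "collectionwise_hausdorff X" "A \<subseteq> T"
  obtains U where "\<And>d. d \<in> minimals A \<Longrightarrow> openin X (U d) \<and> d \<in> U d"
    and "\<And>d e. d \<in> minimals A \<Longrightarrow> e \<in> minimals A \<Longrightarrow> d \<noteq> e \<Longrightarrow> U d \<inter> U e = {}"
  using assms closedin_minimals discrete_minimals unfolding collectionwise_hausdorff_def by metis

end

locale tree_expansion = tree +
  fixes G :: "nat \<Rightarrow> 'a set" and U :: "nat \<Rightarrow> 'a \<Rightarrow> 'a set"
  assumes G_sub: "\<And>n. G n \<subseteq> T"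
    and G_up: "\<And>n. strict_upset (G n) \<subseteq> G n"
    and G_dec: "decseq G"
    and U_open: "\<And>n d. d \<in> minimals (G n) \<Longrightarrow> openin X (U n d)"
    and U_mem: "\<And>n d. d \<in> minimals (G n) \<Longrightarrow> d \<in> U n d"
    and U_disj: "\<And>n d e. d \<in> minimals (G n) \<Longrightarrow> e \<in> minimals (G n) \<Longrightarrow> d \<noteq> e \<Longrightarrow>
      U n d \<inter> U n e = {}"
begin

definition cell :: "nat \<Rightarrow> 'a \<Rightarrow> 'a set" where
  "cell n d = U n d \<inter>
     (case n of 0 \<Rightarrow> T | Suc m \<Rightarrow> if d \<in> minimals (G m) then U m d else strict_upset (G m))"

definition expansion :: "nat \<Rightarrow> 'a set" where
  "expansion n = strict_upset (G n) \<union> (\<Union>d\<in>minimals (G n). cell n d)"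

lemma G_antimono: "m \<le> n \<Longrightarrow> G n \<subseteq> G m"
  using G_dec unfolding decseq_def by blast

lemma G_split: "G n \<subseteq> strict_upset (G n) \<union> minimals (G n)"
  using G_sub unfolding strict_upset_def minimals_def by blast

lemma openin_expansion: "openin X (expansion n)"
proof -
  have "openin X (cell n d)" if "d \<in> minimals (G n)" for d
    using that U_open openin_strict_upset[OF G_sub] openin_topspace[of X]
    unfolding cell_def by (cases n) auto
  then show ?thesis
    unfolding expansion_def using openin_strict_upset[OF G_sub] by blast
qed

lemma subset_expansion: "G n \<subseteq> expansion n"
proof
  fix x assume x: "x \<in> G n"
  show "x \<in> expansion n"
  proof (cases "x \<in> minimals (G n)")
    case True
    have "x \<in> cell n x"
    proof (cases n)
      case 0
      then show ?thesis using True U_mem x G_sub unfolding cell_def by auto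
    next
      case (Suc m)
      have "x \<in> minimals (G m) \<union> strict_upset (G m)"
        using x G_antimono[of m n] G_split[of m] Suc by auto
      then show ?thesis using True U_mem Suc unfolding cell_def by auto
    qed
    then show ?thesis using True unfolding expansion_def by blast
  next
    case False
    then show ?thesis using x G_split unfolding expansion_def by blast
  qed
qed

lemma Inter_expansion_eq_empty:
  assumes G_empty: "(\<Inter>n. G n) = {}"
  shows "(\<Inter>n. expansion n) = {}"
proof (rule ccontr)
  assume "(\<Inter>n. expansion n) \<noteq> {}"
  then obtain y where y: "\<And>n. y \<in> expansion n" by blast
  obtain N where "y \<notin> G N" using G_empty by blast
  then have y_notin_strict_upset: "y \<notin> strict_upset (G n)" if "N \<le> n" for n
    using G_up[of n] G_antimono[OF that] by blast
  have in_some_cell: "\<exists>d\<in>minimals (G n). y \<in> cell n d" if "N \<le> n" for n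
    using y[of n] y_notin_strict_upset[OF that] unfolding expansion_def by blast
  then obtain x where x: "x \<in> minimals (G N)" "y \<in> U N x"
    unfolding cell_def by blast
  have trapped: "x \<in> minimals (G (N + k)) \<and> y \<in> U (N + k) x" for k
  proof (induction k)
    case 0
    then show ?case using x by simp
  next
    case (Suc k)
    obtain d where d: "d \<in> minimals (G (Suc (N + k)))" "y \<in> cell (Suc (N + k)) d"
      using in_some_cell[of "Suc (N + k)"] by auto
    then have "d \<in> minimals (G (N + k))" "y \<in> U (N + k) d"
      using y_notin_strict_upset[of "N + k"] unfolding cell_def by (auto split: if_splits)
    then have "d = x" using U_disj Suc.IH by blast
    then show ?case using d unfolding cell_def by simp
  qed
  have "x \<in> G n" for n
    using trapped[of n] G_antimono[of n "N + n"] unfolding minimals_def by auto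
  then show False using G_empty by blast
qed

end

lemma (in tree) expand_upward_closed_decseq:
  assumes cwh: "collectionwise_hausdorff X"
    and G_sub: "\<And>n. G n \<subseteq> T" and G_up: "\<And>n. strict_upset (G n) \<subseteq> G n"
    and "decseq G" and "(\<Inter>n. G n) = {}"
  shows "\<exists>W. (\<forall>n. openin X (W n) \<and> G n \<subseteq> W n) \<and> (\<Inter>n. W n) = {}"
proof -
  have "\<forall>n. \<exists>V. (\<forall>d\<in>minimals (G n). openin X (V d) \<and> d \<in> V d) \<and>
      (\<forall>d\<in>minimals (G n). \<forall>e\<in>minimals (G n). d \<noteq> e \<longrightarrow> V d \<inter> V e = {})"
    by (metis separating_family_minimals[OF cwh G_sub])
  then obtain U where "\<And>n d. d \<in> minimals (G n) \<Longrightarrow> openin X (U n d) \<and> d \<in> U n d"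
    and "\<And>n d e. d \<in> minimals (G n) \<Longrightarrow> e \<in> minimals (G n) \<Longrightarrow> d \<noteq> e \<Longrightarrow> U n d \<inter> U n e = {}"
    by metis
  then interpret tree_expansion T lt G U
    using G_sub G_up \<open>decseq G\<close> by unfold_locales auto
  show ?thesis
    using openin_expansion subset_expansion Inter_expansion_eq_empty \<open>(\<Inter>n. G n) = {}\<close> by blast
qed

theorem corollary4p22:
  fixes T :: "'a set" and lt :: "'a \<Rightarrow> 'a \<Rightarrow> bool"
  assumes "is_tree T lt"
    and "pseudo_sups_singletons T lt"
    and "collectionwise_hausdorff (interval_topology T lt)"
  shows "countably_metacompact (interval_topology T lt)"
proof -
  interpret tree T lt by (rule tree.intro) (fact assms(1))
  show ?thesis
  proof (rule countably_metacompactI_closed_decseq)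
    fix F assume closed: "\<And>n. closedin X (F n)" and "decseq F" and "(\<Inter>n. F n) = {}"
    have F_sub: "F n \<subseteq> T" for n
      using closedin_subset[OF closed] by simp
    have "(\<Inter>n. upset (F n)) = {}"
      using Inter_upset_eq_empty closed \<open>decseq F\<close> \<open>(\<Inter>n. F n) = {}\<close> .
    then obtain W where "\<forall>n. openin X (W n) \<and> upset (F n) \<subseteq> W n" "(\<Inter>n. W n) = {}"
      using expand_upward_closed_decseq[OF assms(3) upset_subset strict_upset_upset[OF F_sub]
          decseq_upset[OF \<open>decseq F\<close>]]
      by blast
    then show "\<exists>W. (\<forall>n. openin X (W n) \<and> F n \<subseteq> W n) \<and> (\<Inter>n. W n) = {}"
      using subset_upset[OF F_sub] by blast
  qed
qed

end
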